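(* Let $a\ge1$ be an integer with $a^dq>1$. For $l=1,2,\dots$ let $L_l=\{x\in\mathbb{R}^d: a^{(l-1)^d}<|x|<a^{l^d}\}$. Then $P$-almost surely there exists $l_0(\omega)$ such that for every $l\ge l_0(\omega)$ the layer $L_l$ contains a cube $Q(l,n)$ (entirely inside $L_l$) on which $V(x,\omega)=0$.
   Context: For $k\in\mathbb{Z}^d$ let $Q_k=\{x\in\mathbb{R}^d:\|x-k\|_\infty\le1/2\}$, let $(\varepsilon_k)$ be i.i.d. with $P\{\varepsilon_k=1\}=p>0$, $P\{\varepsilon_k=0\}=q=1-p>0$, and $V(x,\omega)=\sum_k\varepsilon_kI_{Q_k}(x)$. For an integer $l\ge1$, $Q(l,n)$, $n\in\mathbb{Z}^d$, are cubes of edge length $l$ partitioning $\mathbb{R}^d$, each a union of $l^d$ unit cubes $Q_k$ (so that $V=0$ on $Q(l,n)$ iff all its $l^d$ unit cubes have $\varepsilon_k=0$). *)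

theory Defs
  imports "HOL-Probability.Probability"
begin

definition unit_cube :: "int^'d \<Rightarrow> (real^'d) set" where
  "unit_cube k = {x. \<forall>i. \<bar>x$i - real_of_int (k$i)\<bar> \<le> 1/2}"

text \<open>The random potential V(x,omega) = sum_k eps_k(omega) I_{Q_k}(x); only finitely many
  Q_k contain a given x, so the sum is over the finite set of such k.\<close>
definition potential :: "(int^'d \<Rightarrow> 'w \<Rightarrow> nat) \<Rightarrow> real^'d \<Rightarrow> 'w \<Rightarrow> real" where
  "potential \<epsilon> x \<omega> = (\<Sum>k\<in>{k. x \<in> unit_cube k}. real (\<epsilon> k \<omega>))"

text \<open>The lattice indices of the l^d unit cubes forming Q(l,n): the cube of edge length l
  whose lowest unit cube is Q_{l n}. These cubes (n ranging over Z^d) partition R^d.\<close>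
definition cells :: "nat \<Rightarrow> int^'d \<Rightarrow> (int^'d) set" where
  "cells l n = {k. \<forall>i. int l * n$i \<le> k$i \<and> k$i < int l * n$i + int l}"

definition big_cube :: "nat \<Rightarrow> int^'d \<Rightarrow> (real^'d) set" where
  "big_cube l n = (\<Union>k\<in>cells l n. unit_cube k)"

text \<open>"V = 0 on Q(l,n)", with the convention fixed in the paper: all l^d unit cubes of
  Q(l,n) have eps_k = 0.\<close>
definition V_zero_on :: "(int^'d \<Rightarrow> 'w \<Rightarrow> nat) \<Rightarrow> nat \<Rightarrow> int^'d \<Rightarrow> 'w \<Rightarrow> bool" where
  "V_zero_on \<epsilon> l n \<omega> \<longleftrightarrow> (\<forall>k\<in>cells l n. \<epsilon> k \<omega> = 0)"

definition layer :: "int \<Rightarrow> nat \<Rightarrow> (real^'d) set" where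
  "layer a l = {x. real_of_int a ^ ((l - 1) ^ CARD('d)) < norm x
                   \<and> norm x < real_of_int a ^ (l ^ CARD('d))}"

end

theory Submission
  imports Defs
begin

(* Write d for the dimension, R1 = a^((l-1)^d) and R2 = a^(l^d) for the radii of
   the layer L_l, and s = q^(l^d) for the probability that a fixed cube Q(l,n) carries V = 0.
   (1) Geometry and counting: if R2 is large against R1 and l, then the cubes Q(l,n) whose
       index n ranges over a suitable box of side K >= R2/(4dl) all lie inside L_l; hence L_l
       contains at least N_l = (R2/(4dl))^d cubes Q(l,n).
   (2) Growth: since a^d q > 1 (which forces a >= 2), N_l s >= (a^d q)^(l^d)/(4dl)^d
       eventually exceeds l^2.
   (3) Probability: distinct cubes Q(l,n) consist of disjoint sets of unit cubes, so the events
       "V = 0 on Q(l,n)" are independent with probability s each.  Hence the probability that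
       none of N cubes carries V = 0 is (1-s)^N <= 1/(1+Ns) <= 1/l^2.
   (4) Since the series of 1/l^2 converges, Borel-Cantelli shows that almost surely only
       finitely many layers fail to contain such a cube, which is the theorem. *)

section \<open>Lattice boxes and the cells of a big cube\<close>

lemma card_box:
  fixes A :: "'d::finite \<Rightarrow> int set"
  shows "card {k::int^'d. \<forall>i. k$i \<in> A i} = (\<Prod>i\<in>UNIV. card (A i))"
proof -
  have "bij_betw vec_nth {k::int^'d. \<forall>i. k$i \<in> A i} (PiE UNIV A)"
    unfolding bij_betw_def
  proof
    show "inj_on vec_nth {k::int^'d. \<forall>i. k$i \<in> A i}" by (auto simp: inj_on_def vec_eq_iff)
    show "vec_nth ` {k::int^'d. \<forall>i. k$i \<in> A i} = PiE UNIV A"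
    proof
      show "PiE UNIV A \<subseteq> vec_nth ` {k::int^'d. \<forall>i. k$i \<in> A i}"
      proof
        fix f assume "f \<in> PiE UNIV A"
        then show "f \<in> vec_nth ` {k::int^'d. \<forall>i. k$i \<in> A i}"
          by (intro image_eqI[of _ _ "vec_lambda f"]) (auto simp: vec_lambda_inverse)
      qed
    qed auto
  qed
  then have "card {k::int^'d. \<forall>i. k$i \<in> A i} = card (PiE UNIV A)" by (rule bij_betw_same_card)
  also have "\<dots> = (\<Prod>i\<in>UNIV. card (A i))" by (simp add: card_PiE)
  finally show ?thesis .
qed

lemma finite_box:
  fixes A :: "'d::finite \<Rightarrow> int set"
  assumes "\<And>i. finite (A i)"
  shows "finite {k::int^'d. \<forall>i. k$i \<in> A i}"
proof -
  have "{k::int^'d. \<forall>i. k$i \<in> A i} \<subseteq> vec_lambda ` PiE UNIV A"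
  proof
    fix k :: "int^'d" assume "k \<in> {k::int^'d. \<forall>i. k$i \<in> A i}"
    then show "k \<in> vec_lambda ` PiE UNIV A" by (intro image_eqI[of _ _ "vec_nth k"]) auto
  qed
  moreover have "finite (PiE UNIV A)" using assms by (simp add: finite_PiE)
  ultimately show ?thesis by (meson finite_imageI finite_subset)
qed

lemma cells_box: "cells l n = {k. \<forall>i. k$i \<in> {int l * n$i ..< int l * n$i + int l}}"
  by (auto simp: cells_def)

lemma card_cells: "card (cells l (n::int^'d)) = l ^ CARD('d)"
  unfolding cells_box card_box by simp

lemma finite_cells: "finite (cells l (n::int^'d))"
  unfolding cells_box by (rule finite_box) simp

lemma cells_nonempty: "l \<ge> 1 \<Longrightarrow> cells l (n::int^'d) \<noteq> {}"
  using card_cells[of l n] by (metis card.empty not_one_le_zero power_eq_0_iff le_zero_eq)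

text \<open>Different big cubes of the same edge length share no unit cube: this is the source of
  the independence of the events ``V = 0 on Q(l,n)''.\<close>
lemma cells_disjoint:
  assumes "n \<noteq> n'"
  shows "cells l (n::int^'d) \<inter> cells l n' = {}"
proof (rule ccontr)
  assume "cells l n \<inter> cells l n' \<noteq> {}"
  then obtain k where k: "k \<in> cells l n" "k \<in> cells l n'" by blast
  from assms obtain i where i: "n$i \<noteq> n'$i" by (auto simp: vec_eq_iff)
  have h: "int l * n$i \<le> k$i" "k$i < int l * n$i + int l"
          "int l * n'$i \<le> k$i" "k$i < int l * n'$i + int l"
    using k by (auto simp: cells_def)
  have "int l * (min (n$i) (n'$i) + 1) \<le> int l * max (n$i) (n'$i)"
    using i by (intro mult_left_mono) auto
  then show False using h by (simp add: algebra_simps min_def max_def split: if_splits)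
qed

section \<open>Big cubes inside a layer\<close>

text \<open>If every index coordinate lies in [c, c+K), every point of Q(l,n) has all coordinates in
  (l c - 1/2, l (c+K)); so Q(l,n) lies in L_l as soon as l c - 1/2 exceeds the inner radius
  (one coordinate bounds the norm from below) and d l (c+K) stays below the outer radius
  (the l1-norm bounds it from above).\<close>
lemma big_cube_in_layer:
  fixes n :: "int^'d" and c K a :: int
  assumes a: "a \<ge> 1"
    and lo: "\<And>i. c \<le> n$i" and hi: "\<And>i. n$i < c + K"
    and inner: "real_of_int a ^ ((l - 1) ^ CARD('d)) < real l * real_of_int c - 1/2"
    and outer: "real CARD('d) * (real l * real_of_int (c + K)) < real_of_int a ^ (l ^ CARD('d))"
  shows "big_cube l n \<subseteq> layer a l"
proof
  fix x assume "x \<in> big_cube l n"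
  then obtain k where k: "k \<in> cells l n" and x: "x \<in> unit_cube k"
    by (auto simp: big_cube_def)
  have R1pos: "0 < real_of_int a ^ ((l - 1) ^ CARD('d))" using a by simp
  have coord: "real_of_int a ^ ((l - 1) ^ CARD('d)) < x$i \<and> x$i < real l * real_of_int (c + K)"
    for i
  proof -
    have xi: "\<bar>x$i - real_of_int (k$i)\<bar> \<le> 1/2" using x by (auto simp: unit_cube_def)
    have ki: "int l * n$i \<le> k$i" "k$i < int l * n$i + int l" using k by (auto simp: cells_def)
    have "int l * c \<le> int l * n$i" using lo[of i] by (intro mult_left_mono) auto
    then have "real_of_int (int l * c) \<le> real_of_int (k$i)" using ki by linarith
    then have A: "real l * real_of_int c \<le> real_of_int (k$i)" by simp
    have "int l * n$i \<le> int l * (c + K - 1)" using hi[of i] by (intro mult_left_mono) auto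
    then have "k$i + 1 \<le> int l * (c + K)" using ki by (simp add: algebra_simps)
    then have "real_of_int (k$i + 1) \<le> real_of_int (int l * (c + K))" by (simp only: of_int_le_iff)
    then have B: "real_of_int (k$i) + 1 \<le> real l * real_of_int (c + K)" by simp
    show ?thesis using xi A B inner unfolding abs_le_iff by linarith
  qed
  obtain i0 :: 'd where True by simp
  have "real_of_int a ^ ((l - 1) ^ CARD('d)) < \<bar>x$i0\<bar>" using coord[of i0] by auto
  also have "\<dots> \<le> norm x" by (rule component_le_norm_cart)
  finally have lower: "real_of_int a ^ ((l - 1) ^ CARD('d)) < norm x" .
  have abs_coord: "\<bar>x$i\<bar> < real l * real_of_int (c + K)" for i
    using coord[of i] R1pos by linarith
  have "norm x \<le> (\<Sum>i\<in>UNIV. \<bar>x$i\<bar>)" by (rule norm_le_l1_cart)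
  also have "\<dots> < (\<Sum>i\<in>(UNIV::'d set). real l * real_of_int (c + K))"
    using abs_coord by (intro sum_strict_mono) auto
  also have "\<dots> < real_of_int a ^ (l ^ CARD('d))" using outer by simp
  finally show "x \<in> layer a l" using lower by (simp add: layer_def)
qed

text \<open>Counting: if the outer radius R2 dominates both 2 d R1 and 12 d l, then the layer L_l
  contains at least (R2/(4dl))^d of the cubes Q(l,n), namely those with index in a box
  [c, c+K)^d with c just above R1/l and c+K just below R2/(dl).\<close>
lemma many_cubes_in_layer:
  fixes a :: int and l :: nat
  assumes l: "l \<ge> 1" and a: "a \<ge> 1"
    and inner: "2 * real CARD('d) * real_of_int a ^ ((l - 1) ^ CARD('d))
                  \<le> real_of_int a ^ (l ^ CARD('d))"
    and outer: "12 * real CARD('d) * real l \<le> real_of_int a ^ (l ^ CARD('d))"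
  obtains S :: "(int^'d) set"
    where "finite S" and "\<And>n. n \<in> S \<Longrightarrow> big_cube l n \<subseteq> layer a l"
      and "(real_of_int a ^ (l ^ CARD('d)) / (4 * real CARD('d) * real l)) ^ CARD('d)
             \<le> real (card S)"
proof -
  define d where "d = CARD('d)"
  define R1 where "R1 = real_of_int a ^ ((l - 1) ^ d)"
  define R2 where "R2 = real_of_int a ^ (l ^ d)"
  define X where "X = R2 / (real d * real l)"
  define c where "c = \<lfloor>(R1 + 1) / real l\<rfloor> + 1"
  define K where "K = \<lceil>X\<rceil> - 1 - c"
  define S where "S = {n::int^'d. \<forall>i. n$i \<in> {c ..< c + K}}"
  have lpos: "real l > 0" and dpos: "real d > 0" using l by (auto simp: d_def)
  have c_lower: "R1 + 1 < real l * real_of_int c"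
    using floor_less_iff[of "(R1 + 1) / real l" "\<lfloor>(R1 + 1) / real l\<rfloor> + 1"] lpos
    by (simp add: c_def field_simps)
  have cK_upper: "real d * real l * real_of_int (c + K) < R2"
    using ceiling_correct[of X] lpos dpos by (simp add: K_def X_def field_simps)
  have in_layer: "big_cube l n \<subseteq> layer a l" if "n \<in> S" for n
    using that c_lower cK_upper
    by (intro big_cube_in_layer[OF a, of c _ K]) (auto simp: S_def R1_def R2_def d_def mult.assoc)
  have X12: "12 \<le> X" using outer lpos dpos by (simp add: X_def R2_def d_def field_simps)
  have R1X: "R1 / real l \<le> X / 2" using inner lpos dpos by (simp add: X_def R1_def R2_def d_def field_simps)
  have "real_of_int c \<le> R1 / real l + 1 / real l + 1"
    using of_int_floor_le[of "(R1 + 1) / real l"] by (simp add: c_def add_divide_distrib)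
  moreover have "X - 1 - real_of_int c \<le> real_of_int K"
    using ceiling_correct[of X] by (simp add: K_def)
  moreover have "1 / real l \<le> 1" using l by simp
  ultimately have KX: "X / 4 \<le> real_of_int K" using R1X X12 by linarith
  then have "(X / 4) ^ d \<le> real_of_int K ^ d" using X12 by (intro power_mono) auto
  also have "\<dots> = real (card S)"
  proof -
    have "card S = nat K ^ d" unfolding S_def card_box d_def by simp
    then show ?thesis using KX X12 by simp
  qed
  finally have "(R2 / (4 * real d * real l)) ^ d \<le> real (card S)"
    by (simp add: X_def mult.commute mult.left_commute)
  moreover have "finite S" unfolding S_def by (rule finite_box) simp
  ultimately show thesis using that in_layer by (simp add: R2_def d_def)
qed

section \<open>Growth of the layers\<close>

lemma poly_le_exp:
  fixes r C :: real and m :: nat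
  assumes "r > 1"
  shows "\<forall>\<^sub>F l in sequentially. C * real l ^ m \<le> r ^ l"
proof -
  define b where "b = ln r"
  have b: "b > 0" using assms by (simp add: b_def)
  have lim: "(\<lambda>l. (b * real l) ^ m / exp (b * real l)) \<longlonglongrightarrow> 0"
    by (rule filterlim_compose[OF tendsto_power_div_exp_0])
       (intro filterlim_tendsto_pos_mult_at_top[OF tendsto_const b] filterlim_real_sequentially)
  have "b ^ m / (\<bar>C\<bar> + 1) > 0" using b by simp
  from order_tendstoD(2)[OF lim this]
  show ?thesis
  proof (rule eventually_mono)
    fix l assume h: "(b * real l) ^ m / exp (b * real l) < b ^ m / (\<bar>C\<bar> + 1)"
    have e: "exp (b * real l) = r ^ l"
      using exp_of_nat_mult[of l b] assms by (simp add: b_def mult.commute)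
    have "(b ^ m * real l ^ m) * (\<bar>C\<bar> + 1) < b ^ m * exp (b * real l)"
      using h b by (simp add: field_simps power_mult_distrib)
    then have "real l ^ m * (\<bar>C\<bar> + 1) < r ^ l" using b e by (simp add: mult.assoc)
    moreover have "C * real l ^ m \<le> real l ^ m * (\<bar>C\<bar> + 1)"
    proof -
      have "C * real l ^ m \<le> \<bar>C\<bar> * real l ^ m" by (rule mult_right_mono) auto
      moreover have "real l ^ m * (\<bar>C\<bar> + 1) = \<bar>C\<bar> * real l ^ m + real l ^ m"
        by (simp add: algebra_simps)
      moreover have "0 \<le> real l ^ m" by simp
      ultimately show ?thesis by linarith
    qed
    ultimately show "C * real l ^ m \<le> r ^ l" by linarith
  qed
qed

lemma power_gap:
  fixes l d :: nat
  assumes "l \<ge> 1" "d \<ge> 1"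
  shows "(l - 1) ^ d + l ^ (d - 1) \<le> l ^ d"
proof -
  have ld: "l ^ d = l * l ^ (d - 1)" and l1d: "(l - 1) ^ d = (l - 1) * (l - 1) ^ (d - 1)"
    using assms by (metis Suc_diff_1 less_le_trans zero_less_one power_Suc)+
  have "(l - 1) ^ d + l ^ (d - 1) \<le> (l - 1) * l ^ (d - 1) + l ^ (d - 1)"
    unfolding l1d by (intro add_right_mono mult_left_mono power_mono) auto
  also have "\<dots> = l ^ d" using assms unfolding ld by (simp add: algebra_simps)
  finally show ?thesis .
qed

text \<open>For large l the two conditions of the counting lemma hold, and the expected number
  N_l s of empty cubes in L_l exceeds l^2, because it is at least (a^d q)^(l^d)/(4dl)^d.\<close>
lemma layer_growth:
  fixes a :: int and q :: real and d :: nat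
  assumes a: "a \<ge> 2" and d: "d \<ge> 1" and q: "q > 0" and r: "real_of_int a ^ d * q > 1"
  shows "\<forall>\<^sub>F l in sequentially. l \<ge> 1
           \<and> 2 * real d * real_of_int a ^ ((l - 1) ^ d) \<le> real_of_int a ^ (l ^ d)
           \<and> 12 * real d * real l \<le> real_of_int a ^ (l ^ d)
           \<and> real l ^ 2 \<le> (real_of_int a ^ (l ^ d) / (4 * real d * real l)) ^ d * q ^ (l ^ d)"
proof -
  define r where "r = real_of_int a ^ d * q"
  have "\<forall>\<^sub>F l in sequentially. l \<ge> 1 \<and> 2 * real d * real l ^ 0 \<le> 2 ^ l \<and>
      12 * real d * real l ^ 1 \<le> 2 ^ l \<and> (4 * real d) ^ d * real l ^ (d + 2) \<le> r ^ l"
    using r by (intro eventually_conj poly_le_exp eventually_ge_at_top) (auto simp: r_def)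
  then show ?thesis
  proof (rule eventually_mono, intro conjI)
    fix l :: nat
    assume "l \<ge> 1 \<and> 2 * real d * real l ^ 0 \<le> 2 ^ l \<and> 12 * real d * real l ^ 1 \<le> 2 ^ l
              \<and> (4 * real d) ^ d * real l ^ (d + 2) \<le> r ^ l"
    then have l: "l \<ge> 1" and E1: "2 * real d \<le> 2 ^ l" and E2: "12 * real d * real l \<le> 2 ^ l"
      and E3: "(4 * real d) ^ d * real l ^ (d + 2) \<le> r ^ l" by auto
    have ld: "l \<le> l ^ d" using l d by (metis power_increasing power_one_right)
    have pow2: "(2::real) ^ m \<le> real_of_int a ^ m" for m using a by (intro power_mono) auto
    show "l \<ge> 1" by fact
    have "2 * real d \<le> 2 ^ (l ^ (d - 1))"
    proof (cases "d = 1")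
      case False
      then have "l ^ 1 \<le> l ^ (d - 1)" using l d by (intro power_increasing) auto
      then have "(2::real) ^ l \<le> 2 ^ (l ^ (d - 1))" by (intro power_increasing) auto
      with E1 show ?thesis by linarith
    qed (use E1 in simp)
    then have "2 * real d \<le> real_of_int a ^ (l ^ (d - 1))" using pow2 order_trans by blast
    then have "2 * real d * real_of_int a ^ ((l - 1) ^ d)
        \<le> real_of_int a ^ ((l - 1) ^ d + l ^ (d - 1))"
      using a by (simp add: power_add mult_right_mono mult.commute)
    also have "\<dots> \<le> real_of_int a ^ (l ^ d)" using power_gap[OF l d] a by (intro power_increasing) auto
    finally show "2 * real d * real_of_int a ^ ((l - 1) ^ d) \<le> real_of_int a ^ (l ^ d)" .
    have "(2::real) ^ l \<le> 2 ^ (l ^ d)" using ld by (intro power_increasing) auto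
    then show "12 * real d * real l \<le> real_of_int a ^ (l ^ d)" using E2 pow2[of "l ^ d"] by linarith
    have Dpos: "(4 * real d * real l) ^ d > 0" using l d by simp
    have "real l ^ 2 * (4 * real d * real l) ^ d = (4 * real d) ^ d * real l ^ (d + 2)"
      by (simp add: power_mult_distrib power_add power2_eq_square)
    also have "\<dots> \<le> r ^ l" by (rule E3)
    also have "\<dots> \<le> r ^ (l ^ d)" using ld r by (intro power_increasing) (auto simp: r_def)
    also have "\<dots> = (real_of_int a ^ (l ^ d)) ^ d * q ^ (l ^ d)"
      by (simp add: r_def power_mult_distrib power_mult[symmetric] mult.commute)
    finally show "real l ^ 2 \<le> (real_of_int a ^ (l ^ d) / (4 * real d * real l)) ^ d * q ^ (l ^ d)"
      using Dpos by (simp add: power_divide field_simps)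
  qed
qed

lemma eventually_many_cubes_in_layer:
  fixes a :: int and q :: real
  assumes a: "a \<ge> 2" and q: "q > 0" and r: "real_of_int a ^ CARD('d) * q > 1"
  shows "\<forall>\<^sub>F l in sequentially. \<exists>S :: (int^'d) set. l \<ge> 1 \<and> finite S
           \<and> (\<forall>n\<in>S. big_cube l n \<subseteq> layer a l) \<and> real l ^ 2 \<le> real (card S) * q ^ (l ^ CARD('d))"
  using layer_growth[OF a _ q r]
proof (rule eventually_mono)
  fix l :: nat
  let ?R2 = "real_of_int a ^ (l ^ CARD('d))"
  assume "l \<ge> 1 \<and> 2 * real CARD('d) * real_of_int a ^ ((l - 1) ^ CARD('d)) \<le> ?R2
           \<and> 12 * real CARD('d) * real l \<le> ?R2
           \<and> real l ^ 2 \<le> (?R2 / (4 * real CARD('d) * real l)) ^ CARD('d) * q ^ (l ^ CARD('d))"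
  then have l: "l \<ge> 1" and inner: "2 * real CARD('d) * real_of_int a ^ ((l - 1) ^ CARD('d)) \<le> ?R2"
    and outer: "12 * real CARD('d) * real l \<le> ?R2"
    and expected: "real l ^ 2 \<le> (?R2 / (4 * real CARD('d) * real l)) ^ CARD('d) * q ^ (l ^ CARD('d))"
    by auto
  have a1: "a \<ge> 1" using a by simp
  obtain S :: "(int^'d) set" where "finite S"
      "\<And>n. n \<in> S \<Longrightarrow> big_cube l n \<subseteq> layer a l"
      and card: "(?R2 / (4 * real CARD('d) * real l)) ^ CARD('d) \<le> real (card S)"
    using many_cubes_in_layer[OF l a1 inner outer] by blast
  moreover have "(?R2 / (4 * real CARD('d) * real l)) ^ CARD('d) * q ^ (l ^ CARD('d))
      \<le> real (card S) * q ^ (l ^ CARD('d))"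
    using card q by (intro mult_right_mono) auto
  ultimately show "\<exists>S :: (int^'d) set. l \<ge> 1 \<and> finite S \<and> (\<forall>n\<in>S. big_cube l n \<subseteq> layer a l)
      \<and> real l ^ 2 \<le> real (card S) * q ^ (l ^ CARD('d))"
    using l expected by (intro exI[of _ S]) auto
qed (simp add: Suc_le_eq)

section \<open>Probability that a layer contains no cube with V = 0\<close>

text \<open>Since distinct cubes Q(l,n) are built from disjoint families of unit cubes, the events
  ``V = 0 on Q(l,n)'' are independent.\<close>
lemma (in prob_space) indep_V_zero_on:
  fixes \<epsilon> :: "int^'d \<Rightarrow> 'a \<Rightarrow> nat"
  assumes indep: "indep_vars (\<lambda>_. count_space UNIV) \<epsilon> UNIV"
  shows "indep_vars (\<lambda>_. count_space UNIV) (\<lambda>n \<omega>. V_zero_on \<epsilon> l n \<omega>) UNIV"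
proof -
  have "indep_vars (\<lambda>n. PiM (cells l n) (\<lambda>_. count_space UNIV))
      (\<lambda>n \<omega>. restrict (\<lambda>k. \<epsilon> k \<omega>) (cells l n)) UNIV"
    by (rule indep_vars_restrict[OF indep]) (auto simp: disjoint_family_on_def cells_disjoint)
  moreover have "(\<lambda>f. \<forall>k\<in>cells l n. f k = 0)
      \<in> measurable (PiM (cells l n) (\<lambda>_. count_space UNIV)) (count_space UNIV)" for n :: "int^'d"
    by (rule pred_intros_finite(3)[OF finite_cells],
        rule measurable_compose[OF measurable_component_singleton, where g="\<lambda>x. x = 0"]) auto
  ultimately have "indep_vars (\<lambda>_. count_space UNIV)
      (\<lambda>n \<omega>. (\<lambda>f. \<forall>k\<in>cells l n. f k = 0) (restrict (\<lambda>k. \<epsilon> k \<omega>) (cells l n))) UNIV"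
    by (rule indep_vars_compose2)
  then show ?thesis
    by (rule iffD1[OF indep_vars_cong, rotated 3]) (auto simp: V_zero_on_def)
qed

lemma (in prob_space) prob_V_zero_on:
  fixes \<epsilon> :: "int^'d \<Rightarrow> 'a \<Rightarrow> nat"
  assumes indep: "indep_vars (\<lambda>_. count_space UNIV) \<epsilon> UNIV"
    and q: "\<And>k. prob {\<omega>\<in>space M. \<epsilon> k \<omega> = 0} = q"
    and l: "l \<ge> 1"
  shows "prob {\<omega>\<in>space M. V_zero_on \<epsilon> l n \<omega>} = q ^ (l ^ CARD('d))"
proof -
  have "{\<omega>\<in>space M. V_zero_on \<epsilon> l n \<omega>} = (\<Inter>k\<in>cells l n. \<epsilon> k -` {0} \<inter> space M)"
    using cells_nonempty[OF l, of n] unfolding V_zero_on_def by blast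
  then have "prob {\<omega>\<in>space M. V_zero_on \<epsilon> l n \<omega>} = (\<Prod>k\<in>cells l n. prob (\<epsilon> k -` {0} \<inter> space M))"
    using indep_varsD[OF indep cells_nonempty[OF l] finite_cells, where A="\<lambda>_. {0}"] by simp
  also have "\<dots> = q ^ card (cells l n)"
    using q by (simp add: vimage_def Int_def conj_commute)
  finally show ?thesis by (simp add: card_cells)
qed

lemma (in prob_space) prob_no_V_zero_cube:
  fixes \<epsilon> :: "int^'d \<Rightarrow> 'a \<Rightarrow> nat"
  assumes indep: "indep_vars (\<lambda>_. count_space UNIV) \<epsilon> UNIV"
    and q: "\<And>k. prob {\<omega>\<in>space M. \<epsilon> k \<omega> = 0} = q"
    and l: "l \<ge> 1" and S: "finite S" "S \<noteq> {}"
  shows "{\<omega>\<in>space M. \<not>(\<exists>n\<in>S. V_zero_on \<epsilon> l n \<omega>)} \<in> events"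
    and "prob {\<omega>\<in>space M. \<not>(\<exists>n\<in>S. V_zero_on \<epsilon> l n \<omega>)} = (1 - q ^ (l ^ CARD('d))) ^ card S"
proof -
  note indZ = indep_V_zero_on[OF indep, of l]
  have "random_variable (count_space UNIV) (\<lambda>\<omega>. V_zero_on \<epsilon> l n \<omega>)" for n
    using indZ by (auto simp: indep_vars_def)
  then have ev: "(\<lambda>\<omega>. V_zero_on \<epsilon> l n \<omega>) -` A \<inter> space M \<in> events" for n A
    using measurable_sets by simp
  have bad: "{\<omega>\<in>space M. \<not>(\<exists>n\<in>S. V_zero_on \<epsilon> l n \<omega>)}
      = (\<Inter>n\<in>S. (\<lambda>\<omega>. V_zero_on \<epsilon> l n \<omega>) -` {False} \<inter> space M)"
    using S(2) by auto
  show "{\<omega>\<in>space M. \<not>(\<exists>n\<in>S. V_zero_on \<epsilon> l n \<omega>)} \<in> events"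
    unfolding bad using S ev by (intro sets.finite_INT) auto
  have compl: "prob ((\<lambda>\<omega>. V_zero_on \<epsilon> l n \<omega>) -` {False} \<inter> space M) = 1 - q ^ (l ^ CARD('d))" for n
  proof -
    have "(\<lambda>\<omega>. V_zero_on \<epsilon> l n \<omega>) -` {False} \<inter> space M
        = space M - {\<omega>\<in>space M. V_zero_on \<epsilon> l n \<omega>}" by auto
    moreover have "{\<omega>\<in>space M. V_zero_on \<epsilon> l n \<omega>} \<in> events"
      using ev[of n "{True}"] by (simp add: vimage_def Int_def conj_commute)
    ultimately show ?thesis using prob_compl prob_V_zero_on[OF indep q l] by simp
  qed
  have "prob (\<Inter>n\<in>S. (\<lambda>\<omega>. V_zero_on \<epsilon> l n \<omega>) -` {False} \<inter> space M)
      = (\<Prod>n\<in>S. prob ((\<lambda>\<omega>. V_zero_on \<epsilon> l n \<omega>) -` {False} \<inter> space M))"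
    by (rule indep_varsD[OF indZ S(2) S(1)]) simp_all
  then show "prob {\<omega>\<in>space M. \<not>(\<exists>n\<in>S. V_zero_on \<epsilon> l n \<omega>)} = (1 - q ^ (l ^ CARD('d))) ^ card S"
    unfolding bad by (simp add: compl)
qed

text \<open>Elementary bound (1-s)^N <= 1/(1+Ns) for 0 <= s <= 1, from Bernoulli's inequality
  applied to (1+s)^N.\<close>
lemma power_one_minus_le:
  fixes s :: real
  assumes "0 \<le> s" "s \<le> 1"
  shows "(1 - s) ^ N * (1 + real N * s) \<le> 1"
proof -
  have "(1 - s) ^ N * (1 + real N * s) \<le> (1 - s) ^ N * (1 + s) ^ N"
    using assms by (intro mult_left_mono Bernoulli_inequality) auto
  also have "\<dots> = (1 - s * s) ^ N" by (simp add: power_mult_distrib[symmetric] algebra_simps)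
  also have "\<dots> \<le> 1" using assms by (intro power_le_one) (auto simp: mult_le_one)
  finally show ?thesis .
qed

lemma (in prob_space) prob_no_V_zero_cube_le:
  fixes \<epsilon> :: "int^'d \<Rightarrow> 'a \<Rightarrow> nat"
  assumes indep: "indep_vars (\<lambda>_. count_space UNIV) \<epsilon> UNIV"
    and q: "\<And>k. prob {\<omega>\<in>space M. \<epsilon> k \<omega> = 0} = q"
    and l: "l \<ge> 1" and S: "finite S"
    and many: "real l ^ 2 \<le> real (card S) * q ^ (l ^ CARD('d))"
  shows "{\<omega>\<in>space M. \<not>(\<exists>n\<in>S. V_zero_on \<epsilon> l n \<omega>)} \<in> events"
    and "prob {\<omega>\<in>space M. \<not>(\<exists>n\<in>S. V_zero_on \<epsilon> l n \<omega>)} \<le> inverse (real l ^ 2)"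
proof -
  define s where "s = q ^ (l ^ CARD('d))"
  have "0 \<le> q" "q \<le> 1" using q[of 0] by (metis measure_nonneg, metis prob_le_1)
  then have s: "0 \<le> s" "s \<le> 1" by (auto simp: s_def power_le_one)
  have "S \<noteq> {}" using many l by auto
  note bad = prob_no_V_zero_cube[OF indep q l S this]
  show "{\<omega>\<in>space M. \<not>(\<exists>n\<in>S. V_zero_on \<epsilon> l n \<omega>)} \<in> events" by (fact bad(1))
  have "(1 - s) ^ card S * real l ^ 2 \<le> (1 - s) ^ card S * (1 + real (card S) * s)"
    using many s by (intro mult_left_mono) (auto simp: s_def)
  also have "\<dots> \<le> 1" by (rule power_one_minus_le[OF s])
  finally have "(1 - s) ^ card S * real l ^ 2 \<le> 1" .
  then show "prob {\<omega>\<in>space M. \<not>(\<exists>n\<in>S. V_zero_on \<epsilon> l n \<omega>)} \<le> inverse (real l ^ 2)"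
    unfolding bad(2) s_def[symmetric] using l by (simp add: field_simps)
qed

text \<open>Borel-Cantelli with quadratic decay: if from some index on the events B l have
  probability at most 1/l^2, then almost surely only finitely many of them occur.\<close>
lemma (in prob_space) AE_eventually_avoids:
  assumes events: "\<And>l. l \<ge> L \<Longrightarrow> B l \<in> events"
    and small: "\<And>l. l \<ge> L \<Longrightarrow> prob (B l) \<le> inverse (real l ^ 2)"
  shows "AE \<omega> in M. \<exists>l0. \<forall>l\<ge>l0. \<omega> \<notin> B l"
proof -
  define A where "A l = (if L \<le> l then B l else {})" for l
  have "A l \<in> events" for l using events by (simp add: A_def)
  moreover have "summable (\<lambda>l. prob (A l))"
  proof (rule summable_comparison_test)
    show "\<exists>N. \<forall>n\<ge>N. norm (prob (A n)) \<le> inverse (real n ^ 2)" using small by (auto simp: A_def)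
  qed (rule inverse_power_summable, simp)
  ultimately have "AE \<omega> in M. eventually (\<lambda>l. \<omega> \<in> space M - A l) sequentially"
    by (intro borel_cantelli_AE1) (auto simp: less_top[symmetric])
  then show ?thesis
  proof (rule eventually_mono)
    fix \<omega> assume "eventually (\<lambda>l. \<omega> \<in> space M - A l) sequentially"
    then obtain N where N: "\<And>l. l \<ge> N \<Longrightarrow> \<omega> \<in> space M - A l"
      by (auto simp: eventually_sequentially)
    have "\<omega> \<notin> B l" if "l \<ge> max L N" for l
      using N[of l] that by (simp add: A_def)
    then show "\<exists>l0. \<forall>l\<ge>l0. \<omega> \<notin> B l" by blast
  qed
qed

theorem mainTheorem11:
  fixes M :: "'w measure" and \<epsilon> :: "int^'d \<Rightarrow> 'w \<Rightarrow> nat"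
    and p q :: real and a :: int
  assumes "prob_space M"
    and "prob_space.indep_vars M (\<lambda>_. count_space UNIV) \<epsilon> UNIV"
    and "\<And>k \<omega>. \<omega> \<in> space M \<Longrightarrow> \<epsilon> k \<omega> \<in> {0, 1}"
    and "\<And>k. measure M {\<omega> \<in> space M. \<epsilon> k \<omega> = 1} = p"
    and "\<And>k. measure M {\<omega> \<in> space M. \<epsilon> k \<omega> = 0} = q"
    and "p > 0" and "q > 0" and "q = 1 - p"
    and "a \<ge> 1" and "real_of_int a ^ CARD('d) * q > 1"
  shows "AE \<omega> in M. \<exists>l0::nat. \<forall>l\<ge>l0. l \<ge> 1 \<longrightarrow>
           (\<exists>n. big_cube l n \<subseteq> layer a l \<and> V_zero_on \<epsilon> l n \<omega>)"
proof -
  interpret prob_space M by fact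
  have "a \<noteq> 1" using assms(6-10) by auto
  then have "a \<ge> 2" using assms(9) by simp
  from eventually_many_cubes_in_layer[OF this assms(7,10)] obtain L where
    "\<forall>l\<ge>L. \<exists>S :: (int^'d) set. l \<ge> 1 \<and> finite S \<and> (\<forall>n\<in>S. big_cube l n \<subseteq> layer a l)
                      \<and> real l ^ 2 \<le> real (card S) * q ^ (l ^ CARD('d))"
    unfolding eventually_sequentially by blast
  then obtain S :: "nat \<Rightarrow> (int^'d) set" where S: "\<And>l. l \<ge> L \<Longrightarrow> l \<ge> 1 \<and> finite (S l)
      \<and> (\<forall>n\<in>S l. big_cube l n \<subseteq> layer a l) \<and> real l ^ 2 \<le> real (card (S l)) * q ^ (l ^ CARD('d))"
    by metis
  define B where "B l = {\<omega>\<in>space M. \<not>(\<exists>n\<in>S l. V_zero_on \<epsilon> l n \<omega>)}" for l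
  have "AE \<omega> in M. \<exists>l0. \<forall>l\<ge>l0. \<omega> \<notin> B l"
    using prob_no_V_zero_cube_le[OF assms(2,5)] S unfolding B_def
    by (intro AE_eventually_avoids[of L]) (simp_all add: Suc_le_eq)
  with AE_space show ?thesis
  proof eventually_elim
    case (elim \<omega>)
    then obtain l0 where "\<And>l. l \<ge> l0 \<Longrightarrow> \<omega> \<notin> B l" by blast
    then have "\<exists>n\<in>S l. V_zero_on \<epsilon> l n \<omega>" if "l \<ge> max L l0" for l
      using elim(1) that by (auto simp: B_def)
    then show ?case using S by (intro exI[of _ "max L l0"]) fastforce
  qed
qed

end
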